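(* Assume $\delta_1=\delta_2=\delta>0$. Suppose that $V(\cdot,p)$ is differentiable in $x$ and that the value function is attained by the admissible control $\pi^*(u\mid x,p)=G\big(u,1-V_x(x,p)\big)$, i.e. $V(x,p)=J(x,p;\pi^* )$ for all $(x,p)\in\mathbb R_+\times(0,1)$. Then for every $p\in(0,1)$, $$\lim_{x\to\infty}V(x,p)=\frac{f_\lambda(0)}{\delta}=\frac{\lambda\ln\big(\lambda(e^{\mathbf a/\lambda}-1)\big)}{\delta}.$$
   Context: Standing setup. Fix $\mu_1,\mu_2>0$, $\mu_1\ne\mu_2$, $\sigma>0$, $q_{12},q_{21}>0$, $\delta_1,\delta_2>0$, $\mathbf a>0$, $\lambda>0$. With a standard Brownian motion $\widehat W$, the belief $(p_t)$, $p_0=p\in(0,1)$, solves $dp_t=(q_{21}(1-p_t)-q_{12}p_t)dt+\frac{\mu_1-\mu_2}{\sigma}p_t(1-p_t)d\widehat W_t$ and stays in $(0,1)$; $\widehat\mu_t=\mu_2+(\mu_1-\mu_2)p_t$, $\widehat\delta_t=\delta_2+(\delta_1-\delta_2)p_t$, $\Lambda_t=\int_0^t\widehat\delta_sds$. For a distributional control (measurable map $(x,p)\mapsto\pi(\cdot\mid x,p)$ into probability densities on $[0,\mathbf a]$), $b^\pi(x,p)=\int_0^{\mathbf a}u\pi(u\mid x,p)du$, $\widehat{\mathcal H}^\pi_\lambda(x,p)=\int_0^{\mathbf a}(u-\lambda\ln\pi(u\mid x,p))\pi(u\mid x,p)du$; surplus $d\widehat X^\pi_t=(\widehat\mu_t-b^\pi(\widehat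 X^\pi_t,p_t))dt+\sigma d\widehat W_t$, $\widehat X^\pi_0=x$; ruin time $\widehat T^\pi_{x,p}=\inf\{t\ge0:\widehat X^\pi_t\le0\}$; $J(x,p;\pi)=\mathbb E_{x,p}[\int_0^{\widehat T^\pi_{x,p}}e^{-\Lambda_t}\widehat{\mathcal H}^\pi_\lambda(\widehat X^\pi_t,p_t)dt]$. Admissibility: normalization and measurability, unique strong solution of the surplus SDE for every initial state, and $\mathbb E_{x,p}[\int_0^{\widehat T^\pi_{x,p}}e^{-\Lambda_t}|\widehat{\mathcal H}^\pi_\lambda|dt]<\infty$. $V=\sup_{\pi}J$ over admissible $\pi$. Gibbs density $G(u,s)=\frac{se^{us/\lambda}}{\lambda(e^{\mathbf as/\lambda}-1)}$ ($s\ne0$), $G(u,0)=1/\mathbf a$. $f_\lambda(y)=\lambda\ln\frac{\lambda(e^{\mathbf a(1-y)/\lambda}-1)}{1-y}$ ($y\ne1$), $f_\lambda(1)=\lambda\ln\mathbf a$. *)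

theory Defs
  imports "HOL-Probability.Probability"
begin

definition gibbs :: "real \<Rightarrow> real \<Rightarrow> real \<Rightarrow> real \<Rightarrow> real" where
  "gibbs lam a u s =
     (if s = 0 then 1 / a else s * exp (u * s / lam) / (lam * (exp (a * s / lam) - 1)))"

definition f_lam :: "real \<Rightarrow> real \<Rightarrow> real \<Rightarrow> real" where
  "f_lam lam a y =
     (if y = 1 then lam * ln a else lam * ln (lam * (exp (a * (1 - y) / lam) - 1) / (1 - y)))"

definition is_filtration :: "'w measure \<Rightarrow> (real \<Rightarrow> 'w measure) \<Rightarrow> bool" where
  "is_filtration M F \<longleftrightarrow>
     (\<forall>t. space (F t) = space M \<and> sets (F t) \<subseteq> sets M) \<and>
     (\<forall>s t. s \<le> t \<longrightarrow> sets (F s) \<subseteq> sets (F t))"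

definition std_BM :: "'w measure \<Rightarrow> (real \<Rightarrow> 'w measure) \<Rightarrow> (real \<Rightarrow> 'w \<Rightarrow> real) \<Rightarrow> bool" where
  "std_BM M F W \<longleftrightarrow> prob_space M \<and> is_filtration M F \<and>
     (\<forall>\<omega>\<in>space M. W 0 \<omega> = 0 \<and> continuous_on {0..} (\<lambda>t. W t \<omega>)) \<and>
     (\<forall>t\<ge>0. W t \<in> borel_measurable (F t)) \<and>
     (\<forall>s t. 0 \<le> s \<and> s < t \<longrightarrow>
        distributed M lborel (\<lambda>\<omega>. W t \<omega> - W s \<omega>) (normal_density 0 (sqrt (t - s))) \<and>
        (\<forall>A\<in>sets (F s). \<forall>B\<in>sets borel.
           measure M (A \<inter> ((\<lambda>\<omega>. W t \<omega> - W s \<omega>) -` B \<inter> space M))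
             = measure M A * measure M ((\<lambda>\<omega>. W t \<omega> - W s \<omega>) -` B \<inter> space M)))"

definition ito_sum :: "(real \<Rightarrow> 'w \<Rightarrow> real) \<Rightarrow> (real \<Rightarrow> 'w \<Rightarrow> real) \<Rightarrow> real \<Rightarrow> nat \<Rightarrow> 'w \<Rightarrow> real" where
  "ito_sum H W t n \<omega> =
     (\<Sum>k<n. H (t * real k / real n) \<omega> * (W (t * real (Suc k) / real n) \<omega> - W (t * real k / real n) \<omega>))"

text \<open>I is (a version of) the Ito integral of the continuous adapted H against W over [0,t]:
  the limit in probability of the left Riemann sums.\<close>
definition is_ito_integral ::
  "'w measure \<Rightarrow> (real \<Rightarrow> 'w \<Rightarrow> real) \<Rightarrow> (real \<Rightarrow> 'w \<Rightarrow> real) \<Rightarrow> real \<Rightarrow> ('w \<Rightarrow> real) \<Rightarrow> bool" where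
  "is_ito_integral M H W t I \<longleftrightarrow>
     (\<forall>\<epsilon>>0. (\<lambda>n. measure M {\<omega>\<in>space M. \<bar>ito_sum H W t n \<omega> - I \<omega>\<bar> > \<epsilon>}) \<longlonglongrightarrow> 0)"

definition belief_process ::
  "'w measure \<Rightarrow> (real \<Rightarrow> 'w measure) \<Rightarrow> (real \<Rightarrow> 'w \<Rightarrow> real) \<Rightarrow>
   real \<Rightarrow> real \<Rightarrow> real \<Rightarrow> real \<Rightarrow> real \<Rightarrow> real \<Rightarrow> (real \<Rightarrow> 'w \<Rightarrow> real) \<Rightarrow> bool" where
  "belief_process M F W mu1 mu2 sig q12 q21 p0 P \<longleftrightarrow>
     (\<forall>\<omega>\<in>space M. P 0 \<omega> = p0 \<and> continuous_on {0..} (\<lambda>t. P t \<omega>) \<and>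
        (\<forall>t\<ge>0. P t \<omega> \<in> {0<..<1})) \<and>
     (\<forall>t\<ge>0. P t \<in> borel_measurable (F t)) \<and>
     (\<forall>t\<ge>0. is_ito_integral M (\<lambda>s \<omega>. (mu1 - mu2) / sig * P s \<omega> * (1 - P s \<omega>)) W t
        (\<lambda>\<omega>. P t \<omega> - p0 - (LINT s:{0..t}|lborel. q21 * (1 - P s \<omega>) - q12 * P s \<omega>)))"

text \<open>A control is pi u x p = density at u in [0,a] given state (x,p).\<close>
definition control_ok :: "real \<Rightarrow> (real \<Rightarrow> real \<Rightarrow> real \<Rightarrow> real) \<Rightarrow> bool" where
  "control_ok a \<pi> \<longleftrightarrow>
     (\<lambda>z. \<pi> (fst z) (fst (snd z)) (snd (snd z))) \<in> borel_measurable borel \<and>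
     (\<forall>x p. p \<in> {0<..<1} \<longrightarrow>
        (\<forall>u\<in>{0..a}. 0 \<le> \<pi> u x p) \<and>
        set_integrable lborel {0..a} (\<lambda>u. \<pi> u x p) \<and>
        (LINT u:{0..a}|lborel. \<pi> u x p) = 1)"

definition bctl :: "real \<Rightarrow> (real \<Rightarrow> real \<Rightarrow> real \<Rightarrow> real) \<Rightarrow> real \<Rightarrow> real \<Rightarrow> real" where
  "bctl a \<pi> x p = (LINT u:{0..a}|lborel. u * \<pi> u x p)"

definition Hctl :: "real \<Rightarrow> real \<Rightarrow> (real \<Rightarrow> real \<Rightarrow> real \<Rightarrow> real) \<Rightarrow> real \<Rightarrow> real \<Rightarrow> real" where
  "Hctl lam a \<pi> x p = (LINT u:{0..a}|lborel. (u - lam * ln (\<pi> u x p)) * \<pi> u x p)"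

text \<open>|H|, taken to be infinite when the defining integral does not exist (H = -infinity).\<close>
definition Habs :: "real \<Rightarrow> real \<Rightarrow> (real \<Rightarrow> real \<Rightarrow> real \<Rightarrow> real) \<Rightarrow> real \<Rightarrow> real \<Rightarrow> ennreal" where
  "Habs lam a \<pi> x p =
     (if set_integrable lborel {0..a} (\<lambda>u. (u - lam * ln (\<pi> u x p)) * \<pi> u x p)
      then ennreal \<bar>Hctl lam a \<pi> x p\<bar> else \<top>)"

definition surplus_sol ::
  "'w measure \<Rightarrow> (real \<Rightarrow> 'w measure) \<Rightarrow> (real \<Rightarrow> 'w \<Rightarrow> real) \<Rightarrow> real \<Rightarrow> real \<Rightarrow> real \<Rightarrow> real \<Rightarrow>
   (real \<Rightarrow> 'w \<Rightarrow> real) \<Rightarrow> (real \<Rightarrow> real \<Rightarrow> real \<Rightarrow> real) \<Rightarrow> real \<Rightarrow> (real \<Rightarrow> 'w \<Rightarrow> real) \<Rightarrow> bool" where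
  "surplus_sol M F W mu1 mu2 sig a P \<pi> x X \<longleftrightarrow>
     (\<forall>t\<ge>0. X t \<in> borel_measurable (F t)) \<and>
     (\<forall>\<omega>\<in>space M. continuous_on {0..} (\<lambda>t. X t \<omega>)) \<and>
     (AE \<omega> in M. \<forall>t\<ge>0. X t \<omega> =
        x + (LINT s:{0..t}|lborel. (mu2 + (mu1 - mu2) * P s \<omega>) - bctl a \<pi> (X s \<omega>) (P s \<omega>))
          + sig * W t \<omega>)"

definition ruin_time :: "(real \<Rightarrow> 'w \<Rightarrow> real) \<Rightarrow> 'w \<Rightarrow> ereal" where
  "ruin_time X \<omega> = Inf {ereal t | t. 0 \<le> t \<and> X t \<omega> \<le> 0}"

definition disc :: "real \<Rightarrow> real \<Rightarrow> (real \<Rightarrow> 'w \<Rightarrow> real) \<Rightarrow> real \<Rightarrow> 'w \<Rightarrow> real" where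
  "disc d1 d2 P t \<omega> = exp (- (LINT s:{0..t}|lborel. d2 + (d1 - d2) * P s \<omega>))"

definition alive :: "(real \<Rightarrow> 'w \<Rightarrow> real) \<Rightarrow> 'w \<Rightarrow> real set" where
  "alive X \<omega> = {t. 0 \<le> t \<and> ereal t < ruin_time X \<omega>}"

definition Jobj ::
  "'w measure \<Rightarrow> (real \<Rightarrow> 'w measure) \<Rightarrow> (real \<Rightarrow> 'w \<Rightarrow> real) \<Rightarrow> real \<Rightarrow> real \<Rightarrow> real \<Rightarrow>
   real \<Rightarrow> real \<Rightarrow> real \<Rightarrow> real \<Rightarrow> (real \<Rightarrow> real \<Rightarrow> 'w \<Rightarrow> real) \<Rightarrow>
   (real \<Rightarrow> real \<Rightarrow> real \<Rightarrow> real) \<Rightarrow> real \<Rightarrow> real \<Rightarrow> real" where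
  "Jobj M F W mu1 mu2 sig d1 d2 a lam Pf \<pi> x p =
     (let X = (SOME X. surplus_sol M F W mu1 mu2 sig a (Pf p) \<pi> x X) in
      \<integral>\<omega>. (LINT t:alive X \<omega>|lborel. disc d1 d2 (Pf p) t \<omega> * Hctl lam a \<pi> (X t \<omega>) (Pf p t \<omega>)) \<partial>M)"

definition admissible ::
  "'w measure \<Rightarrow> (real \<Rightarrow> 'w measure) \<Rightarrow> (real \<Rightarrow> 'w \<Rightarrow> real) \<Rightarrow> real \<Rightarrow> real \<Rightarrow> real \<Rightarrow>
   real \<Rightarrow> real \<Rightarrow> real \<Rightarrow> real \<Rightarrow> (real \<Rightarrow> real \<Rightarrow> 'w \<Rightarrow> real) \<Rightarrow>
   (real \<Rightarrow> real \<Rightarrow> real \<Rightarrow> real) \<Rightarrow> bool" where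
  "admissible M F W mu1 mu2 sig d1 d2 a lam Pf \<pi> \<longleftrightarrow>
     control_ok a \<pi> \<and>
     (\<forall>x\<ge>0. \<forall>p\<in>{0<..<1}.
        (\<exists>X. surplus_sol M F W mu1 mu2 sig a (Pf p) \<pi> x X) \<and>
        (\<forall>X Y. surplus_sol M F W mu1 mu2 sig a (Pf p) \<pi> x X \<longrightarrow>
               surplus_sol M F W mu1 mu2 sig a (Pf p) \<pi> x Y \<longrightarrow>
               (AE \<omega> in M. \<forall>t\<ge>0. X t \<omega> = Y t \<omega>)) \<and>
        (let X = (SOME X. surplus_sol M F W mu1 mu2 sig a (Pf p) \<pi> x X) in
          (\<integral>\<^sup>+\<omega>. (\<integral>\<^sup>+t. indicator (alive X \<omega>) t * ennreal (disc d1 d2 (Pf p) t \<omega>)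
                       * Habs lam a \<pi> (X t \<omega>) (Pf p t \<omega>) \<partial>lborel) \<partial>M) < \<top>))"

definition value_fn ::
  "'w measure \<Rightarrow> (real \<Rightarrow> 'w measure) \<Rightarrow> (real \<Rightarrow> 'w \<Rightarrow> real) \<Rightarrow> real \<Rightarrow> real \<Rightarrow> real \<Rightarrow>
   real \<Rightarrow> real \<Rightarrow> real \<Rightarrow> real \<Rightarrow> (real \<Rightarrow> real \<Rightarrow> 'w \<Rightarrow> real) \<Rightarrow> real \<Rightarrow> real \<Rightarrow> ereal" where
  "value_fn M F W mu1 mu2 sig d1 d2 a lam Pf x p =
     (SUP \<pi>\<in>{\<pi>. admissible M F W mu1 mu2 sig d1 d2 a lam Pf \<pi>}.
        ereal (Jobj M F W mu1 mu2 sig d1 d2 a lam Pf \<pi> x p))"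

end

theory Submission
  imports Defs
begin

text \<open>
  With equal discount rates the discount factor is \<open>exp (- \<delta> t)\<close>, so the objective of a control is
  the expected integral of its running reward \<open>H\<close> against \<open>exp (- \<delta> t) dt\<close> up to ruin.
  By Gibbs' variational inequality every Gibbs control earns \<open>H \<le> f_\<lambda>(0)\<close>, with equality for
  the state-independent control \<open>G(u,1)\<close>. Writing \<open>K(T) = \<integral>\<^sub>0\<^sup>T exp (- \<delta> t) dt\<close>, this gives
  \<open>f_\<lambda>(0) E[K(T\<^sub>x)] \<le> V(x,p) = J(x,p;\<pi>\<^sup>*) \<le> f_\<lambda>(0) E[K(T\<^sup>*\<^sub>x)]\<close> for the ruin times \<open>T\<^sub>x\<close>
  and \<open>T\<^sup>*\<^sub>x\<close> of the two controls. Since controls are bounded by \<open>a\<close>, the surplus started at \<open>x\<close>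
  dominates \<open>x + c t + \<sigma> W\<^sub>t\<close> for a constant \<open>c\<close>; so both ruin times tend to infinity almost surely as \<open>x \<rightarrow> \<infinity>\<close>,
  and by dominated convergence both bounds tend to \<open>f_\<lambda>(0) / \<delta>\<close>.
\<close>

section \<open>Gibbs densities\<close>

lemma f_lam_zero: "f_lam lam a 0 = lam * ln (lam * (exp (a / lam) - 1))"
  by (simp add: f_lam_def)

lemma gibbs_pos:
  assumes "lam > 0" "a > 0"
  shows "gibbs lam a u s > 0"
proof (cases "s = 0")
  case False
  have "0 < s / (lam * (exp (a * s / lam) - 1))"
    using False assms
    by (cases "s > 0") (auto simp: zero_less_divide_iff zero_less_mult_iff mult_less_0_iff divide_less_0_iff)
  moreover have "gibbs lam a u s = exp (u * s / lam) * (s / (lam * (exp (a * s / lam) - 1)))"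
    using False by (simp add: gibbs_def)
  ultimately show ?thesis
    by (metis exp_gt_zero mult_pos_pos)
qed (use assms in \<open>simp add: gibbs_def\<close>)

lemma continuous_on_gibbs:
  assumes "lam > 0" "a > 0"
  shows "continuous_on A (\<lambda>u. gibbs lam a u s)"
proof (cases "s = 0")
  case False
  then have "lam * (exp (a * s / lam) - 1) \<noteq> 0"
    using assms by simp
  then show ?thesis
    using False by (auto simp: gibbs_def intro!: continuous_intros)
qed (simp add: gibbs_def)

lemma continuous_on_gibbs_reward:
  assumes "lam > 0" "a > 0"
  shows "continuous_on A (\<lambda>u. (u - lam * ln (gibbs lam a u s)) * gibbs lam a u s)"
  using gibbs_pos[OF assms] by (auto intro!: continuous_intros continuous_on_gibbs[OF assms] simp: less_imp_neq[symmetric])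

lemma integral_gibbs:
  assumes "lam > 0" "a > 0"
  shows "(LINT u:{0..a}|lborel. gibbs lam a u s) = 1"
proof (cases "s = 0")
  case True
  then show ?thesis
    using assms by (simp add: gibbs_def set_integral_const)
next
  case False
  define E where "E = exp (a * s / lam) - 1"
  have "E \<noteq> 0"
    using False assms by (simp add: E_def)
  have "(LBINT u=(0::real)..a. gibbs lam a u s) = exp (a * s / lam) / E - exp (0 * s / lam) / E"
  proof (rule interval_integral_FTC_finite)
    show "continuous_on {min 0 a..max 0 a} (\<lambda>u. gibbs lam a u s)"
      by (rule continuous_on_gibbs[OF assms])
    fix u
    have "((\<lambda>u. exp (u * s / lam) / E) has_real_derivative exp (u * s / lam) * (s / lam) / E) (at u)"
      using assms \<open>E \<noteq> 0\<close> by (auto intro!: derivative_eq_intros)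
    moreover have "exp (u * s / lam) * (s / lam) / E = gibbs lam a u s"
      using False by (simp add: gibbs_def E_def)
    ultimately show "((\<lambda>u. exp (u * s / lam) / E) has_vector_derivative gibbs lam a u s)
        (at u within {min 0 a..max 0 a})"
      by (simp add: has_real_derivative_iff_has_vector_derivative has_vector_derivative_at_within)
  qed
  also have "\<dots> = 1"
    using \<open>E \<noteq> 0\<close> by (simp add: diff_divide_distrib[symmetric] E_def)
  finally show ?thesis
    using assms by (simp add: interval_integral_Icc)
qed

lemma ln_gibbs_one:
  assumes "lam > 0" "a > 0"
  shows "lam * ln (gibbs lam a u 1) = u - f_lam lam a 0"
  using assms by (simp add: gibbs_def f_lam_zero ln_div algebra_simps)

lemma gibbs_one_reward:
  assumes "lam > 0" "a > 0"
  shows "(u - lam * ln (gibbs lam a u 1)) * gibbs lam a u 1 = f_lam lam a 0 * gibbs lam a u 1"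
  by (simp add: ln_gibbs_one[OF assms])

text \<open>Pointwise form of Gibbs' inequality: \<open>ln y \<le> y - 1\<close> applied to \<open>y = G(u,1) / q\<close>.\<close>
lemma entropy_reward_le:
  assumes "lam > 0" "a > 0" "q \<ge> 0"
  shows "(u - lam * ln q) * q \<le> f_lam lam a 0 * q + lam * (gibbs lam a u 1 - q)"
proof (cases "q = 0")
  case True
  then show ?thesis
    using gibbs_pos[OF assms(1,2), of u 1] assms by simp
next
  case False
  let ?g = "gibbs lam a u 1"
  have q: "q > 0" and g: "?g > 0"
    using False assms gibbs_pos[OF assms(1,2)] by auto
  have "ln ?g - ln q \<le> ?g / q - 1"
    using ln_le_minus_one[of "?g / q"] g q by (simp add: ln_div)
  then have "lam * q * (ln ?g - ln q) \<le> lam * q * (?g / q - 1)"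
    using assms q by (intro mult_left_mono) auto
  moreover have "lam * (q * ln ?g) = q * (u - f_lam lam a 0)"
    using ln_gibbs_one[OF assms(1,2), of u] by (metis mult.left_commute)
  ultimately show ?thesis
    using q by (simp add: algebra_simps)
qed

theorem gibbs_variational_inequality:
  assumes "lam > 0" "a > 0"
    and q_nonneg: "\<And>u. u \<in> {0..a} \<Longrightarrow> q u \<ge> 0"
    and q_int: "set_integrable lborel {0..a} q" and q_norm: "(LINT u:{0..a}|lborel. q u) = 1"
    and reward_int: "set_integrable lborel {0..a} (\<lambda>u. (u - lam * ln (q u)) * q u)"
  shows "(LINT u:{0..a}|lborel. (u - lam * ln (q u)) * q u) \<le> f_lam lam a 0"
proof -
  let ?c = "f_lam lam a 0"
  have g_int: "set_integrable lborel {0..a} (\<lambda>u. gibbs lam a u 1)"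
    by (rule borel_integrable_atLeastAtMost'[OF continuous_on_gibbs[OF assms(1,2)]])
  have bound_int: "set_integrable lborel {0..a} (\<lambda>u. ?c * q u + lam * (gibbs lam a u 1 - q u))"
    using q_int g_int by (intro set_integral_add set_integrable_mult_right set_integral_diff) auto
  have "(LINT u:{0..a}|lborel. (u - lam * ln (q u)) * q u)
      \<le> (LINT u:{0..a}|lborel. ?c * q u + lam * (gibbs lam a u 1 - q u))"
    using entropy_reward_le[OF assms(1,2) q_nonneg] by (intro set_integral_mono[OF reward_int bound_int])
  also have "\<dots> = ?c * (LINT u:{0..a}|lborel. q u)
      + lam * ((LINT u:{0..a}|lborel. gibbs lam a u 1) - (LINT u:{0..a}|lborel. q u))"
    using q_int g_int
    by (simp add: set_integral_add set_integrable_mult_right set_integral_diff set_integral_mult_right)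
  also have "\<dots> = ?c"
    using q_norm integral_gibbs[OF assms(1,2)] by simp
  finally show ?thesis .
qed

section \<open>Controls\<close>

lemma bctl_le:
  assumes "control_ok a \<pi>" "p \<in> {0<..<1}" "a > 0"
  shows "bctl a \<pi> x p \<le> a"
proof (cases "set_integrable lborel {0..a} (\<lambda>u. u * \<pi> u x p)")
  case True
  have \<pi>_int: "set_integrable lborel {0..a} (\<lambda>u. \<pi> u x p)"
    and \<pi>_nonneg: "\<forall>u\<in>{0..a}. 0 \<le> \<pi> u x p" and \<pi>_norm: "(LINT u:{0..a}|lborel. \<pi> u x p) = 1"
    using assms unfolding control_ok_def by auto
  have "bctl a \<pi> x p \<le> (LINT u:{0..a}|lborel. a * \<pi> u x p)"
    unfolding bctl_def using \<pi>_int \<pi>_nonneg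
    by (intro set_integral_mono[OF True]) (auto intro!: set_integrable_mult_right mult_right_mono)
  also have "\<dots> = a"
    using \<pi>_norm by (simp add: set_integral_mult_right)
  finally show ?thesis .
next
  case False
  then show ?thesis
    using assms by (simp add: bctl_def set_lebesgue_integral_def set_integrable_def not_integrable_integral_eq)
qed

lemma Hctl_le_of_gibbs:
  assumes "lam > 0" "a > 0" and gibbs_form: "\<And>u. u \<in> {0..a} \<Longrightarrow> \<pi> u x p = gibbs lam a u s"
  shows "Hctl lam a \<pi> x p \<le> f_lam lam a 0"
proof -
  have "Hctl lam a \<pi> x p = (LINT u:{0..a}|lborel. (u - lam * ln (gibbs lam a u s)) * gibbs lam a u s)"
    unfolding Hctl_def by (rule set_lebesgue_integral_cong) (auto simp: gibbs_form)
  also have "\<dots> \<le> f_lam lam a 0"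
    using gibbs_pos[OF assms(1,2)] integral_gibbs[OF assms(1,2)]
    by (intro gibbs_variational_inequality assms(1,2) less_imp_le borel_integrable_atLeastAtMost'
        continuous_on_gibbs continuous_on_gibbs_reward)
  finally show ?thesis .
qed

lemma borel_measurable_Hctl:
  assumes "control_ok a \<pi>"
  shows "(\<lambda>z. Hctl lam a \<pi> (fst z) (snd z)) \<in> borel_measurable (borel :: (real \<times> real) measure)"
proof -
  have \<pi>_meas: "(\<lambda>w. \<pi> (fst w) (fst (snd w)) (snd (snd w))) \<in> borel_measurable borel"
    using assms unfolding control_ok_def by blast
  have "(\<lambda>w::(real \<times> real) \<times> real. (snd w, fst w)) \<in> (borel \<Otimes>\<^sub>M lborel) \<rightarrow>\<^sub>M (borel \<Otimes>\<^sub>M borel)"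
    by measurable
  then have swap: "(\<lambda>w::(real \<times> real) \<times> real. (snd w, fst w))
      \<in> (borel \<Otimes>\<^sub>M lborel) \<rightarrow>\<^sub>M (borel :: (real \<times> real \<times> real) measure)"
    by (simp add: borel_prod)
  have [measurable]: "(\<lambda>w::(real \<times> real) \<times> real. \<pi> (snd w) (fst (fst w)) (snd (fst w)))
      \<in> borel_measurable (borel \<Otimes>\<^sub>M lborel)"
    using measurable_compose[OF swap \<pi>_meas] by simp
  show ?thesis
    unfolding Hctl_def set_lebesgue_integral_def
    by (rule lborel.borel_measurable_lebesgue_integral) (simp add: case_prod_beta', measurable)
qed

text \<open>It maximises the running reward \<open>H\<close> itself, ignoring the value function.\<close>
definition myopic_control :: "real \<Rightarrow> real \<Rightarrow> real \<Rightarrow> real \<Rightarrow> real \<Rightarrow> real" where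
  "myopic_control lam a u x p = gibbs lam a u 1"

lemma control_ok_myopic_control:
  assumes "lam > 0" "a > 0"
  shows "control_ok a (myopic_control lam a)"
  unfolding control_ok_def
proof (intro conjI allI impI)
  show "(\<lambda>z. myopic_control lam a (fst z) (fst (snd z)) (snd (snd z))) \<in> borel_measurable borel"
    unfolding myopic_control_def
    by (intro borel_measurable_continuous_onI continuous_on_compose2[OF continuous_on_gibbs[OF assms]]
        continuous_intros) auto
  fix x p :: real
  show "\<forall>u\<in>{0..a}. 0 \<le> myopic_control lam a u x p"
    using gibbs_pos[OF assms] by (simp add: myopic_control_def less_imp_le)
  show "set_integrable lborel {0..a} (\<lambda>u. myopic_control lam a u x p)"
    unfolding myopic_control_def by (rule borel_integrable_atLeastAtMost'[OF continuous_on_gibbs[OF assms]])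
  show "(LINT u:{0..a}|lborel. myopic_control lam a u x p) = 1"
    unfolding myopic_control_def by (rule integral_gibbs[OF assms])
qed

lemma Hctl_myopic_control:
  assumes "lam > 0" "a > 0"
  shows "Hctl lam a (myopic_control lam a) x p = f_lam lam a 0"
proof -
  have "Hctl lam a (myopic_control lam a) x p = (LINT u:{0..a}|lborel. f_lam lam a 0 * gibbs lam a u 1)"
    unfolding Hctl_def myopic_control_def by (simp add: gibbs_one_reward[OF assms])
  also have "\<dots> = f_lam lam a 0"
    by (simp add: set_integral_mult_right integral_gibbs[OF assms])
  finally show ?thesis .
qed

lemma Habs_myopic_control:
  assumes "lam > 0" "a > 0"
  shows "Habs lam a (myopic_control lam a) x p = ennreal \<bar>f_lam lam a 0\<bar>"
proof -
  have "set_integrable lborel {0..a} (\<lambda>u. (u - lam * ln (gibbs lam a u 1)) * gibbs lam a u 1)"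
    by (rule borel_integrable_atLeastAtMost'[OF continuous_on_gibbs_reward[OF assms]])
  then show ?thesis
    by (simp add: Habs_def Hctl_myopic_control[OF assms] myopic_control_def)
qed

lemma bctl_myopic_control: "bctl a (myopic_control lam a) y q = (LINT u:{0..a}|lborel. u * gibbs lam a u 1)"
  by (simp add: bctl_def myopic_control_def)

section \<open>Ruin times\<close>

lemma atLeastAtMost_subset_closure_Rats: "{0..t} \<subseteq> closure ({0..t} \<inter> \<rat>)" for t :: real
proof (cases "0 < t")
  case True
  then have "closure ({0..t} \<inter> \<rat>) = closure {0..t}"
    by (intro closure_convex_Int_superset) (auto simp: Rats_closure_real)
  then show ?thesis
    by simp
next
  case False
  then have "{0..t} \<subseteq> {0} \<inter> {0..t}"
    by auto
  also have "\<dots> \<subseteq> closure ({0..t} \<inter> \<rat>)"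
    using closure_subset by fastforce
  finally show ?thesis .
qed

lemma positive_on_Icc_iff_rational:
  fixes f :: "real \<Rightarrow> real"
  assumes cont: "continuous_on {0..t} f"
  shows "(\<forall>s\<in>{0..t}. f s > 0) \<longleftrightarrow> (\<exists>n::nat. \<forall>r\<in>{0..t} \<inter> \<rat>. 1 / Suc n \<le> f r)"
proof
  assume pos: "\<forall>s\<in>{0..t}. f s > 0"
  show "\<exists>n::nat. \<forall>r\<in>{0..t} \<inter> \<rat>. 1 / Suc n \<le> f r"
  proof (cases "0 \<le> t")
    case True
    then obtain s0 where s0: "s0 \<in> {0..t}" "\<And>s. s \<in> {0..t} \<Longrightarrow> f s0 \<le> f s"
      using continuous_attains_inf[OF compact_Icc _ cont] by auto
    obtain n where n: "inverse (real (Suc n)) < f s0"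
      using reals_Archimedean pos s0(1) by blast
    have "1 / Suc n \<le> f r" if "r \<in> {0..t}" for r
      using n s0(2)[OF that] by (simp add: inverse_eq_divide)
    then show ?thesis
      by blast
  qed auto
next
  assume "\<exists>n::nat. \<forall>r\<in>{0..t} \<inter> \<rat>. 1 / Suc n \<le> f r"
  then obtain n :: nat where n: "\<And>r. r \<in> {0..t} \<inter> \<rat> \<Longrightarrow> 1 / Suc n \<le> f r"
    by blast
  have closed: "closed {s \<in> {0..t}. 1 / Suc n \<le> f s}"
    by (intro continuous_on_closed_Collect_le cont continuous_on_const) simp
  note atLeastAtMost_subset_closure_Rats[of t]
  also have "closure ({0..t} \<inter> \<rat>) \<subseteq> {s \<in> {0..t}. 1 / Suc n \<le> f s}"
    using n by (intro closure_minimal[OF _ closed]) auto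
  finally have "1 / Suc n \<le> f s" if "s \<in> {0..t}" for s
    using that by blast
  moreover have "0 < 1 / real (Suc n)"
    by simp
  ultimately show "\<forall>s\<in>{0..t}. f s > 0"
    by (meson order_less_le_trans)
qed

lemma ruin_time_nonneg: "0 \<le> ruin_time X \<omega>"
  unfolding ruin_time_def by (auto intro!: Inf_greatest)

lemma ruin_time_le: "0 \<le> t \<Longrightarrow> X t \<omega> \<le> 0 \<Longrightarrow> ruin_time X \<omega> \<le> ereal t"
  unfolding ruin_time_def by (auto intro!: Inf_lower)

lemma pos_of_alive: "t \<in> alive X \<omega> \<Longrightarrow> X t \<omega> > 0"
  unfolding alive_def using ruin_time_le[of t X \<omega>] by force

lemma less_ruin_time_iff:
  assumes cont: "continuous_on {0..} (\<lambda>t. X t \<omega>)"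
  shows "ereal t < ruin_time X \<omega> \<longleftrightarrow> (\<forall>s\<in>{0..t}. X s \<omega> > 0)"
proof
  assume less: "ereal t < ruin_time X \<omega>"
  show "\<forall>s\<in>{0..t}. X s \<omega> > 0"
  proof (rule ballI, rule ccontr)
    fix s assume s: "s \<in> {0..t}" and "\<not> X s \<omega> > 0"
    then have "ruin_time X \<omega> \<le> ereal s"
      by (intro ruin_time_le) auto
    also have "\<dots> \<le> ereal t"
      using s by simp
    finally show False
      using less by simp
  qed
next
  assume pos: "\<forall>s\<in>{0..t}. X s \<omega> > 0"
  show "ereal t < ruin_time X \<omega>"
  proof (cases "0 \<le> t")
    case True
    have "((\<lambda>s. X s \<omega>) \<longlongrightarrow> X t \<omega>) (at t within {0..})"
      using cont True by (simp add: continuous_on_def)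
    then have "eventually (\<lambda>s. X s \<omega> > 0) (at t within {0..})"
      using pos True by (intro order_tendstoD(1)) auto
    then obtain d where d: "d > 0" "\<And>s. s \<in> {0..} \<Longrightarrow> s \<noteq> t \<Longrightarrow> dist s t < d \<Longrightarrow> X s \<omega> > 0"
      unfolding eventually_at by blast
    have "ereal t < ereal (t + d)"
      using d(1) by simp
    also have "\<dots> \<le> ruin_time X \<omega>"
      unfolding ruin_time_def
    proof (rule Inf_greatest, clarify)
      fix s assume s: "0 \<le> s" "X s \<omega> \<le> 0"
      then have "t < s" and "\<not> dist s t < d"
        using pos d(2)[of s] by force+
      then show "ereal (t + d) \<le> ereal s"
        by (simp add: dist_real_def)
    qed
    finally show ?thesis .
  next
    case False
    then have "ereal t < 0"
      by simp
    also have "\<dots> \<le> ruin_time X \<omega>"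
      by (rule ruin_time_nonneg)
    finally show ?thesis .
  qed
qed

lemma borel_measurable_ruin_time:
  assumes meas: "\<And>t. 0 \<le> t \<Longrightarrow> X t \<in> borel_measurable M"
    and cont: "\<And>\<omega>. \<omega> \<in> space M \<Longrightarrow> continuous_on {0..} (\<lambda>t. X t \<omega>)"
  shows "ruin_time X \<in> borel_measurable M"
proof (rule borel_measurableI_greater)
  fix y :: ereal
  have "{\<omega> \<in> space M. ereal t < ruin_time X \<omega>} \<in> sets M" for t
  proof -
    have "{\<omega> \<in> space M. ereal t < ruin_time X \<omega>}
        = {\<omega> \<in> space M. \<exists>n::nat. \<forall>r\<in>{0..t} \<inter> \<rat>. 1 / Suc n \<le> X r \<omega>}"
    proof (rule Collect_cong, rule conj_cong[OF refl])
      fix \<omega> assume "\<omega> \<in> space M"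
      note cont\<omega> = cont[OF this]
      show "ereal t < ruin_time X \<omega> \<longleftrightarrow> (\<exists>n::nat. \<forall>r\<in>{0..t} \<inter> \<rat>. 1 / Suc n \<le> X r \<omega>)"
        unfolding less_ruin_time_iff[where X = X and \<omega> = \<omega>, OF cont\<omega>]
        by (rule positive_on_Icc_iff_rational[OF continuous_on_subset[OF cont\<omega>]]) auto
    qed
    also have "\<dots> \<in> sets M"
    proof (intro sets.sets_Collect_countable_Ex sets.sets_Collect_countable_All' countable_Int2 countable_rat)
      fix n :: nat and r assume "r \<in> {0..t} \<inter> \<rat>"
      then have [measurable]: "X r \<in> borel_measurable M"
        using meas by auto
      show "{\<omega> \<in> space M. 1 / Suc n \<le> X r \<omega>} \<in> sets M"
        by measurable
    qed
    finally show ?thesis .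
  qed
  moreover have "{\<omega> \<in> space M. \<infinity> < ruin_time X \<omega>} = {}"
    by simp
  moreover have "{\<omega> \<in> space M. -\<infinity> < ruin_time X \<omega>} = space M"
    using ruin_time_nonneg[of X] by (auto simp: order_less_le_trans)
  ultimately show "{\<omega> \<in> space M. y < ruin_time X \<omega>} \<in> sets M"
    by (cases y) auto
qed

section \<open>Measurability and integration\<close>

lemma measurable_from_filtration:
  assumes "is_filtration M F" "f \<in> borel_measurable (F t)"
  shows "f \<in> borel_measurable M"
  using assms by (intro measurable_from_subalg[of M "F t"]) (auto simp: subalgebra_def is_filtration_def)

lemma measurable_filtration_mono:
  assumes "is_filtration M F" "s \<le> t" "f \<in> borel_measurable (F s)"
  shows "f \<in> borel_measurable (F t)"
  using assms by (intro measurable_from_subalg[of "F t" "F s"]) (auto simp: subalgebra_def is_filtration_def)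

lemma LIMSEQ_floor_mult_divide:
  fixes s :: real
  shows "(\<lambda>k. \<lfloor>s * real (Suc k)\<rfloor> / real (Suc k)) \<longlonglongrightarrow> s"
proof (rule tendsto_sandwich[of "\<lambda>k. s - 1 / real (Suc k)" _ _ "\<lambda>_. s"])
  show "\<forall>\<^sub>F k in sequentially. s - 1 / real (Suc k) \<le> \<lfloor>s * real (Suc k)\<rfloor> / real (Suc k)"
  proof (intro always_eventually allI)
    fix k
    have "(s - 1 / real (Suc k)) * real (Suc k) = s * real (Suc k) - 1"
      by (simp add: field_simps)
    then show "s - 1 / real (Suc k) \<le> \<lfloor>s * real (Suc k)\<rfloor> / real (Suc k)"
      by (simp add: pos_le_divide_eq del: of_nat_Suc)
  qed
  show "\<forall>\<^sub>F k in sequentially. \<lfloor>s * real (Suc k)\<rfloor> / real (Suc k) \<le> s"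
    by (intro always_eventually allI) (simp add: pos_divide_le_eq del: of_nat_Suc)
  have "(\<lambda>k. s - inverse (real (Suc k))) \<longlonglongrightarrow> s - 0"
    by (intro tendsto_intros LIMSEQ_inverse_real_of_nat)
  then show "(\<lambda>k. s - 1 / real (Suc k)) \<longlonglongrightarrow> s"
    by (simp add: inverse_eq_divide)
qed simp

text \<open>The process is the pointwise limit of its evaluations along the grids \<open>\<lfloor>s k\<rfloor> / k\<close>.\<close>
lemma borel_measurable_continuous_paths:
  fixes Q :: "real \<Rightarrow> 'w \<Rightarrow> real"
  assumes meas: "\<And>s. Q s \<in> borel_measurable N"
    and cont: "\<And>\<omega>. \<omega> \<in> space N \<Longrightarrow> continuous_on UNIV (\<lambda>s. Q s \<omega>)"
  shows "(\<lambda>z. Q (snd z) (fst z)) \<in> borel_measurable (N \<Otimes>\<^sub>M lborel)"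
proof (rule borel_measurable_LIMSEQ_real)
  let ?Q = "\<lambda>k z. Q (\<lfloor>snd z * real (Suc k)\<rfloor> / real (Suc k)) (fst z)"
  show "?Q k \<in> borel_measurable (N \<Otimes>\<^sub>M lborel)" for k
  proof (rule measurable_compose_countable[where f = "\<lambda>i z. Q (i / real (Suc k)) (fst z)"])
    show "(\<lambda>z. Q (i / real (Suc k)) (fst z)) \<in> borel_measurable (N \<Otimes>\<^sub>M lborel)" for i :: int
      using meas by measurable
  qed measurable
  fix z :: "'w \<times> real"
  assume "z \<in> space (N \<Otimes>\<^sub>M lborel)"
  then have "continuous_on UNIV (\<lambda>s. Q s (fst z))"
    using cont by (auto simp: space_pair_measure)
  then have "isCont (\<lambda>s. Q s (fst z)) (snd z)"
    by (simp add: continuous_on_eq_continuous_at)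
  then show "(\<lambda>k. ?Q k z) \<longlonglongrightarrow> Q (snd z) (fst z)"
    using LIMSEQ_floor_mult_divide isCont_tendsto_compose by blast
qed

lemma borel_measurable_continuous_paths_nonneg:
  fixes X :: "real \<Rightarrow> 'w \<Rightarrow> real"
  assumes meas: "\<And>t. 0 \<le> t \<Longrightarrow> X t \<in> borel_measurable M"
    and cont: "\<And>\<omega>. \<omega> \<in> space M \<Longrightarrow> continuous_on {0..} (\<lambda>t. X t \<omega>)"
  shows "(\<lambda>z. X (max 0 (snd z)) (fst z)) \<in> borel_measurable (M \<Otimes>\<^sub>M lborel)"
proof (rule borel_measurable_continuous_paths[where Q = "\<lambda>s. X (max 0 s)"])
  show "X (max 0 s) \<in> borel_measurable M" for s
    by (rule meas) simp
  show "continuous_on UNIV (\<lambda>s. X (max 0 s) \<omega>)" if "\<omega> \<in> space M" for \<omega>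
    by (intro continuous_on_compose2[OF cont[OF that]] continuous_intros) auto
qed

lemma continuous_on_integral_Icc:
  fixes \<phi> :: "real \<Rightarrow> real"
  assumes "continuous_on UNIV \<phi>"
  shows "continuous_on {0..} (\<lambda>t. LINT s:{0..t}|lborel. \<phi> s)"
proof -
  have "isCont (\<lambda>t::real. LBINT s=(0::real)..t. \<phi> s) t0" for t0 :: real
  proof -
    have "((\<lambda>u. LBINT s=(0::real)..u. \<phi> s) has_vector_derivative \<phi> t0) (at t0 within {- \<bar>t0\<bar> - 1..\<bar>t0\<bar> + 1})"
      by (rule interval_integral_FTC2) (auto intro: continuous_on_subset[OF assms])
    moreover have "at t0 within {- \<bar>t0\<bar> - 1..\<bar>t0\<bar> + 1} = at t0"
      by (rule at_within_Icc_at) auto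
    ultimately show ?thesis
      using has_vector_derivative_continuous by fastforce
  qed
  then have "continuous_on {0..} (\<lambda>t::real. LBINT s=(0::real)..t. \<phi> s)"
    by (simp add: continuous_at_imp_continuous_on)
  then show ?thesis
    by (rule continuous_on_cong[THEN iffD1, rotated 2]) (auto simp: interval_integral_Icc)
qed

lemma borel_measurable_integral_adapted:
  fixes P :: "real \<Rightarrow> 'w \<Rightarrow> real" and f :: "real \<Rightarrow> real"
  assumes filt: "is_filtration M F" and "0 \<le> t" and [measurable]: "f \<in> borel_measurable borel"
    and P_meas: "\<And>s. 0 \<le> s \<Longrightarrow> P s \<in> borel_measurable (F s)"
    and P_cont: "\<And>\<omega>. \<omega> \<in> space M \<Longrightarrow> continuous_on {0..} (\<lambda>s. P s \<omega>)"
  shows "(\<lambda>\<omega>. LINT s:{0..t}|lborel. f (P s \<omega>)) \<in> borel_measurable (F t)"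
proof -
  let ?P = "\<lambda>s. P (max 0 (min t s))"
  have [measurable]: "(\<lambda>z. ?P (snd z) (fst z)) \<in> borel_measurable (F t \<Otimes>\<^sub>M lborel)"
  proof (rule borel_measurable_continuous_paths)
    show "?P s \<in> borel_measurable (F t)" for s
      using \<open>0 \<le> t\<close> by (intro measurable_filtration_mono[OF filt _ P_meas]) auto
    fix \<omega> assume "\<omega> \<in> space (F t)"
    then have "\<omega> \<in> space M"
      using filt unfolding is_filtration_def by auto
    then show "continuous_on UNIV (\<lambda>s. ?P s \<omega>)"
      by (intro continuous_on_compose2[OF P_cont] continuous_intros) auto
  qed
  have "(LINT s:{0..t}|lborel. f (P s \<omega>)) = (\<integral>s. indicator {0..t} s *\<^sub>R f (?P s \<omega>) \<partial>lborel)" for \<omega>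
    unfolding set_lebesgue_integral_def by (intro Bochner_Integration.integral_cong) (auto split: split_indicator)
  then show ?thesis
    by (simp only:) (rule lborel.borel_measurable_lebesgue_integral, simp add: case_prod_beta', measurable)
qed

lemma iterated_integral_mono:
  fixes R B :: "'a \<Rightarrow> real \<Rightarrow> real"
  assumes "sigma_finite_measure M"
    and R_int: "integrable (M \<Otimes>\<^sub>M lborel) (\<lambda>z. R (fst z) (snd z))"
    and B_int: "\<And>\<omega>. \<omega> \<in> space M \<Longrightarrow> integrable lborel (B \<omega>)"
    and B_int': "integrable M (\<lambda>\<omega>. \<integral>t. B \<omega> t \<partial>lborel)"
    and le: "\<And>\<omega> t. \<omega> \<in> space M \<Longrightarrow> R \<omega> t \<le> B \<omega> t"
  shows "(\<integral>\<omega>. (\<integral>t. R \<omega> t \<partial>lborel) \<partial>M) \<le> (\<integral>\<omega>. (\<integral>t. B \<omega> t \<partial>lborel) \<partial>M)"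
proof (rule integral_mono_AE[OF _ B_int'])
  have pair: "pair_sigma_finite M lborel"
    by (simp add: pair_sigma_finite_def assms(1) lborel.sigma_finite_measure_axioms)
  show "integrable M (\<lambda>\<omega>. \<integral>t. R \<omega> t \<partial>lborel)"
    using pair_sigma_finite.integrable_fst'[OF pair R_int] by simp
  show "AE \<omega> in M. (\<integral>t. R \<omega> t \<partial>lborel) \<le> (\<integral>t. B \<omega> t \<partial>lborel)"
    using pair_sigma_finite.AE_integrable_fst'[OF pair R_int] AE_space
    by eventually_elim (use B_int le in \<open>auto intro: integral_mono\<close>)
qed

section \<open>Discounted lifetime\<close>

lemma set_integrable_exp_neg:
  "d > 0 \<Longrightarrow> set_integrable lborel {0..} (\<lambda>t::real. exp (- d * t))"
  using nonnegative_absolutely_integrable_1[OF integrable_on_exp_minus_to_infinity]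
  by (simp add: set_integrable_def integrable_completion)

lemma integral_exp_neg:
  fixes d :: real
  assumes "d > 0"
  shows "(LINT t:{0..}|lborel. exp (- d * t)) = 1 / d"
proof -
  have "(LINT t:{0..}|lborel. exp (- d * t)) = integral {0..} (\<lambda>t. exp (- d * t))"
    by (rule set_borel_integral_eq_integral(2)[OF set_integrable_exp_neg[OF assms]])
  also have "\<dots> = exp (- d * 0) / d"
    by (rule integral_unique[OF has_integral_exp_minus_to_infinity[OF assms]])
  finally show ?thesis
    by simp
qed

definition discounted_lifetime :: "real \<Rightarrow> ereal \<Rightarrow> real" where
  "discounted_lifetime d T = (LINT t:{t. 0 \<le> t \<and> ereal t < T}|lborel. exp (- d * t))"

lemma discounted_lifetime_bounds:
  assumes "d > 0"
  shows "0 \<le> discounted_lifetime d T" "discounted_lifetime d T \<le> 1 / d"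
proof -
  show "0 \<le> discounted_lifetime d T"
    unfolding discounted_lifetime_def set_lebesgue_integral_def
    by (intro integral_nonneg_AE AE_I2) (auto split: split_indicator)
  have "set_integrable lborel {t. 0 \<le> t \<and> ereal t < T} (\<lambda>t. exp (- d * t))"
    by (rule set_integrable_subset[OF set_integrable_exp_neg[OF assms]]) auto
  then have "discounted_lifetime d T \<le> (LINT t:{0..}|lborel. exp (- d * t))"
    using set_integrable_exp_neg[OF assms]
    unfolding discounted_lifetime_def set_lebesgue_integral_def set_integrable_def
    by (intro integral_mono) (auto split: split_indicator)
  then show "discounted_lifetime d T \<le> 1 / d"
    using integral_exp_neg[OF assms] by simp
qed

lemma borel_measurable_discounted_lifetime [measurable]:
  assumes "T \<in> borel_measurable M"
  shows "(\<lambda>\<omega>. discounted_lifetime d (T \<omega>)) \<in> borel_measurable M"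
  unfolding discounted_lifetime_def set_lebesgue_integral_def using assms by measurable

lemma integrable_discounted_lifetime:
  assumes "prob_space M" "T \<in> borel_measurable M" "d > 0"
  shows "integrable M (\<lambda>\<omega>. discounted_lifetime d (T \<omega>))"
proof -
  interpret prob_space M by fact
  show ?thesis
    using discounted_lifetime_bounds[OF \<open>d > 0\<close>] assms(2)
    by (intro integrable_const_bound[where B = "1 / d"]) auto
qed

lemma discounted_lifetime_ruin_time:
  "discounted_lifetime d (ruin_time X \<omega>) = (\<integral>t. indicator (alive X \<omega>) t * exp (- d * t) \<partial>lborel)"
  by (simp add: discounted_lifetime_def alive_def set_lebesgue_integral_def)

lemma discounted_lifetime_tendsto:
  assumes "d > 0" and to_infinity: "\<And>t. eventually (\<lambda>n. ereal t < T n) sequentially"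
  shows "(\<lambda>n. discounted_lifetime d (T n)) \<longlonglongrightarrow> 1 / d"
proof -
  have "(\<lambda>n. \<integral>t. indicator {t. 0 \<le> t \<and> ereal t < T n} t *\<^sub>R exp (- d * t) \<partial>lborel)
        \<longlonglongrightarrow> (\<integral>t. indicator {0..} t *\<^sub>R exp (- d * t) \<partial>lborel)"
  proof (rule integral_dominated_convergence[where w = "\<lambda>t. indicator {0..} t *\<^sub>R exp (- d * t)"])
    show "integrable lborel (\<lambda>t. indicator {0..} t *\<^sub>R exp (- d * t))"
      using set_integrable_exp_neg[OF assms(1)] unfolding set_integrable_def .
    show "AE t in lborel. (\<lambda>n. indicat_real {t. 0 \<le> t \<and> ereal t < T n} t *\<^sub>R exp (- d * t))
       \<longlonglongrightarrow> indicat_real {0..} t *\<^sub>R exp (- d * t)"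
    proof (intro AE_I2)
      fix t :: real
      show "(\<lambda>n. indicat_real {t. 0 \<le> t \<and> ereal t < T n} t *\<^sub>R exp (- d * t))
         \<longlonglongrightarrow> indicat_real {0..} t *\<^sub>R exp (- d * t)"
      proof (cases "0 \<le> t")
        case True
        then show ?thesis
          by (intro tendsto_eventually) (rule eventually_mono[OF to_infinity[of t]], simp)
      qed simp
    qed
  qed (auto split: split_indicator)
  then show ?thesis
    using integral_exp_neg[OF assms(1)] by (simp add: discounted_lifetime_def set_lebesgue_integral_def)
qed

lemma disc_same_rate: "0 \<le> t \<Longrightarrow> disc d d P t \<omega> = exp (- d * t)"
  by (simp add: disc_def set_integral_const)

section \<open>Surplus processes\<close>

lemma surplus_sol_measurable:
  assumes "surplus_sol M F W mu1 mu2 sig a P \<pi> x X" "is_filtration M F" "0 \<le> t"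
  shows "X t \<in> borel_measurable M"
  using assms measurable_from_filtration unfolding surplus_sol_def by blast

lemma surplus_sol_continuous:
  assumes "surplus_sol M F W mu1 mu2 sig a P \<pi> x X" "\<omega> \<in> space M"
  shows "continuous_on {0..} (\<lambda>t. X t \<omega>)"
  using assms unfolding surplus_sol_def by blast

lemma borel_measurable_ruin_time_surplus:
  assumes "surplus_sol M F W mu1 mu2 sig a P \<pi> x X" "is_filtration M F"
  shows "ruin_time X \<in> borel_measurable M"
  using assms by (intro borel_measurable_ruin_time surplus_sol_measurable surplus_sol_continuous)

lemma min_le_mixture:
  fixes q :: real
  assumes "0 \<le> q" "q \<le> 1"
  shows "min mu1 mu2 \<le> mu2 + (mu1 - mu2) * q"
proof -
  have "min mu1 mu2 = (1 - q) * min mu1 mu2 + q * min mu1 mu2"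
    by (simp add: algebra_simps)
  also have "\<dots> \<le> (1 - q) * mu2 + q * mu1"
    using assms by (intro add_mono mult_left_mono) auto
  finally show ?thesis
    by (simp add: algebra_simps)
qed

lemma surplus_drift_ge:
  assumes "control_ok a \<pi>" "a > 0" "q \<in> {0<..<1}"
  shows "min 0 (min mu1 mu2 - a) \<le> (mu2 + (mu1 - mu2) * q) - bctl a \<pi> y q"
proof -
  have "min mu1 mu2 \<le> mu2 + (mu1 - mu2) * q"
    using assms(3) by (intro min_le_mixture) auto
  moreover have "bctl a \<pi> y q \<le> a"
    by (rule bctl_le[OF assms(1,3,2)])
  ultimately show ?thesis
    by linarith
qed

text \<open>Valid even when the integral does not exist (and is therefore \<open>0\<close>), because \<open>c \<le> 0\<close>.\<close>
lemma set_integral_Icc_ge_const: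
  fixes h :: "real \<Rightarrow> real"
  assumes "0 \<le> t" "c \<le> 0" "\<And>s. s \<in> {0..t} \<Longrightarrow> c \<le> h s"
  shows "c * t \<le> (LINT s:{0..t}|lborel. h s)"
proof (cases "set_integrable lborel {0..t} h")
  case True
  have "(LINT s:{0..t}|lborel. c) \<le> (LINT s:{0..t}|lborel. h s)"
    using assms(3) by (intro set_integral_mono[OF _ True] borel_integrable_atLeastAtMost' continuous_on_const)
  then show ?thesis
    using assms(1) by (simp add: set_integral_const mult.commute)
next
  case False
  then show ?thesis
    using assms(1,2)
    by (simp add: set_lebesgue_integral_def set_integrable_def not_integrable_integral_eq mult_nonpos_nonneg)
qed

lemma surplus_sol_lower_bound:
  assumes sol: "surplus_sol M F W mu1 mu2 sig a P \<pi> x X"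
    and ctl: "control_ok a \<pi>" and "a > 0"
    and P_range: "\<And>\<omega> s. \<omega> \<in> space M \<Longrightarrow> 0 \<le> s \<Longrightarrow> P s \<omega> \<in> {0<..<1}"
  shows "AE \<omega> in M. \<forall>t\<ge>0. x + min 0 (min mu1 mu2 - a) * t + sig * W t \<omega> \<le> X t \<omega>"
proof -
  have "AE \<omega> in M. \<forall>t\<ge>0. X t \<omega> =
      x + (LINT s:{0..t}|lborel. (mu2 + (mu1 - mu2) * P s \<omega>) - bctl a \<pi> (X s \<omega>) (P s \<omega>)) + sig * W t \<omega>"
    using sol unfolding surplus_sol_def by blast
  then show ?thesis
    using AE_space
  proof eventually_elim
    case (elim \<omega>)
    have "min 0 (min mu1 mu2 - a) * t
        \<le> (LINT s:{0..t}|lborel. (mu2 + (mu1 - mu2) * P s \<omega>) - bctl a \<pi> (X s \<omega>) (P s \<omega>))" if "0 \<le> t" for t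
      using that P_range[OF elim(2)] by (intro set_integral_Icc_ge_const surplus_drift_ge[OF ctl \<open>a > 0\<close>]) auto
    then show ?case
      using elim(1) by fastforce
  qed
qed

lemma eventually_less_ruin_time:
  fixes X :: "nat \<Rightarrow> real \<Rightarrow> 'w \<Rightarrow> real"
  assumes cont: "\<And>n. continuous_on {0..} (\<lambda>t. X n t \<omega>)"
    and cont_W: "continuous_on {0..} (\<lambda>t. W t \<omega>)"
    and lower: "\<And>n t. 0 \<le> t \<Longrightarrow> x n + c * t + sig * W t \<omega> \<le> X n t \<omega>"
    and x_lim: "filterlim x at_top sequentially"
  shows "eventually (\<lambda>n. ereal t0 < ruin_time (X n) \<omega>) sequentially"
proof -
  obtain m where m: "\<And>s. s \<in> {0..t0} \<Longrightarrow> m \<le> c * s + sig * W s \<omega>"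
  proof (cases "0 \<le> t0")
    case True
    have path_cont: "continuous_on {0..t0} (\<lambda>s. c * s + sig * W s \<omega>)"
      by (intro continuous_intros continuous_on_subset[OF cont_W]) auto
    obtain s0 where "\<And>s. s \<in> {0..t0} \<Longrightarrow> c * s0 + sig * W s0 \<omega> \<le> c * s + sig * W s \<omega>"
      using continuous_attains_inf[OF compact_Icc _ path_cont] True by blast
    then show ?thesis
      by (rule that)
  qed (use that in auto)
  have "eventually (\<lambda>n. x n > - m) sequentially"
    using x_lim by (simp add: filterlim_at_top_dense)
  then show ?thesis
  proof (rule eventually_mono)
    fix n
    assume "x n > - m"
    have "X n s \<omega> > 0" if "s \<in> {0..t0}" for s
    proof -
      have "x n + m \<le> X n s \<omega>"
        using lower[of s n] m[OF that] that by auto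
      then show ?thesis
        using \<open>x n > - m\<close> by linarith
    qed
    then show "ereal t0 < ruin_time (X n) \<omega>"
      using less_ruin_time_iff[where X = "X n" and \<omega> = \<omega>, OF cont] by blast
  qed
qed

lemma tendsto_at_top_nonneg_sequentially:
  fixes f :: "real \<Rightarrow> 'a::first_countable_topology"
  assumes "\<And>xs. (\<And>n. 0 \<le> xs n) \<Longrightarrow> filterlim xs at_top sequentially \<Longrightarrow> (\<lambda>n. f (xs n)) \<longlonglongrightarrow> l"
  shows "(f \<longlongrightarrow> l) at_top"
proof (rule tendsto_at_topI_sequentially)
  fix xs :: "nat \<Rightarrow> real"
  assume lim: "filterlim xs at_top sequentially"
  have "(\<lambda>n. f (max 0 (xs n))) \<longlonglongrightarrow> l"
    by (rule assms) (auto intro: filterlim_at_top_mono[OF lim])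
  moreover have "eventually (\<lambda>n. 0 \<le> xs n) sequentially"
    using lim by (simp add: filterlim_at_top)
  then have "eventually (\<lambda>n. f (max 0 (xs n)) = f (xs n)) sequentially"
    by (rule eventually_mono) simp
  ultimately show "(\<lambda>n. f (xs n)) \<longlonglongrightarrow> l"
    by (rule Lim_transform_eventually)
qed

text \<open>The drift is bounded below, so ruin is postponed indefinitely as the initial surplus grows.\<close>
lemma expected_discounted_lifetime_tendsto:
  assumes BM: "std_BM M F W"
    and sol: "\<And>x. 0 \<le> x \<Longrightarrow> surplus_sol M F W mu1 mu2 sig a P \<pi> x (X x)"
    and ctl: "control_ok a \<pi>" and "a > 0" "d > 0"
    and P_range: "\<And>\<omega> s. \<omega> \<in> space M \<Longrightarrow> 0 \<le> s \<Longrightarrow> P s \<omega> \<in> {0<..<1}"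
  shows "((\<lambda>x. \<integral>\<omega>. discounted_lifetime d (ruin_time (X x) \<omega>) \<partial>M) \<longlongrightarrow> 1 / d) at_top"
proof (rule tendsto_at_top_nonneg_sequentially)
  fix xs :: "nat \<Rightarrow> real"
  assume xs_nonneg: "\<And>n. 0 \<le> xs n" and xs_lim: "filterlim xs at_top sequentially"
  have "prob_space M" and filt: "is_filtration M F"
    and cont_W: "\<And>\<omega>. \<omega> \<in> space M \<Longrightarrow> continuous_on {0..} (\<lambda>t. W t \<omega>)"
    using BM unfolding std_BM_def by auto
  interpret prob_space M by fact
  note sol_n = sol[OF xs_nonneg]
  have "AE \<omega> in M. \<forall>n. \<forall>t\<ge>0. xs n + min 0 (min mu1 mu2 - a) * t + sig * W t \<omega> \<le> X (xs n) t \<omega>"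
    unfolding AE_all_countable using surplus_sol_lower_bound[OF sol_n ctl \<open>a > 0\<close> P_range] by blast
  then have "AE \<omega> in M. (\<lambda>n. discounted_lifetime d (ruin_time (X (xs n)) \<omega>)) \<longlonglongrightarrow> 1 / d"
    using AE_space
  proof eventually_elim
    case (elim \<omega>)
    show ?case
    proof (rule discounted_lifetime_tendsto[OF \<open>d > 0\<close>])
      fix t0
      show "eventually (\<lambda>n. ereal t0 < ruin_time (X (xs n)) \<omega>) sequentially"
        by (rule eventually_less_ruin_time[where W = W and c = "min 0 (min mu1 mu2 - a)" and sig = sig,
              OF _ _ _ xs_lim])
          (use elim cont_W surplus_sol_continuous[OF sol_n] in auto)
    qed
  qed
  then have "(\<lambda>n. \<integral>\<omega>. discounted_lifetime d (ruin_time (X (xs n)) \<omega>) \<partial>M) \<longlonglongrightarrow> (\<integral>\<omega>. 1 / d \<partial>M)"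
    using discounted_lifetime_bounds[OF \<open>d > 0\<close>] borel_measurable_ruin_time_surplus[OF sol_n filt]
    by (intro integral_dominated_convergence[where w = "\<lambda>_. 1 / d"]) auto
  then show "(\<lambda>n. \<integral>\<omega>. discounted_lifetime d (ruin_time (X (xs n)) \<omega>) \<partial>M) \<longlonglongrightarrow> 1 / d"
    by (simp add: prob_space)
qed

lemma belief_process_adapted:
  "belief_process M F W mu1 mu2 sig q12 q21 p0 P \<Longrightarrow> 0 \<le> s \<Longrightarrow> P s \<in> borel_measurable (F s)"
  unfolding belief_process_def by blast

lemma belief_process_continuous:
  "belief_process M F W mu1 mu2 sig q12 q21 p0 P \<Longrightarrow> \<omega> \<in> space M \<Longrightarrow> continuous_on {0..} (\<lambda>s. P s \<omega>)"
  unfolding belief_process_def by blast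

lemma belief_process_range:
  "belief_process M F W mu1 mu2 sig q12 q21 p0 P \<Longrightarrow> \<omega> \<in> space M \<Longrightarrow> 0 \<le> s \<Longrightarrow> P s \<omega> \<in> {0<..<1}"
  unfolding belief_process_def by blast

lemma surplus_sol_admissible:
  assumes "admissible M F W mu1 mu2 sig d1 d2 a lam Pf \<pi>" "p \<in> {0<..<1}" "0 \<le> x"
  shows "surplus_sol M F W mu1 mu2 sig a (Pf p) \<pi> x (SOME X. surplus_sol M F W mu1 mu2 sig a (Pf p) \<pi> x X)"
proof -
  have "\<exists>X. surplus_sol M F W mu1 mu2 sig a (Pf p) \<pi> x X"
    using assms unfolding admissible_def by blast
  then show ?thesis
    by (rule someI_ex)
qed

lemma expected_discounted_lifetime_tendsto_admissible:
  assumes BM: "std_BM M F W" and belief: "belief_process M F W mu1 mu2 sig q12 q21 p (Pf p)"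
    and p: "p \<in> {0<..<1}" and adm: "admissible M F W mu1 mu2 sig d d a lam Pf \<pi>" and "a > 0" "d > 0"
  shows "((\<lambda>x. \<integral>\<omega>. discounted_lifetime d
      (ruin_time (SOME X. surplus_sol M F W mu1 mu2 sig a (Pf p) \<pi> x X) \<omega>) \<partial>M) \<longlongrightarrow> 1 / d) at_top"
  by (rule expected_discounted_lifetime_tendsto[OF BM surplus_sol_admissible[OF adm p]])
    (use adm belief_process_range[OF belief] assms(5,6) in \<open>auto simp: admissible_def\<close>)

section \<open>The objective\<close>

definition discounted_reward ::
  "real \<Rightarrow> real \<Rightarrow> real \<Rightarrow> (real \<Rightarrow> real \<Rightarrow> real \<Rightarrow> real) \<Rightarrow>
   (real \<Rightarrow> 'w \<Rightarrow> real) \<Rightarrow> (real \<Rightarrow> 'w \<Rightarrow> real) \<Rightarrow> 'w \<Rightarrow> real \<Rightarrow> real" where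
  "discounted_reward d lam a \<pi> P X \<omega> t =
     indicator (alive X \<omega>) t * (exp (- d * t) * Hctl lam a \<pi> (X t \<omega>) (P t \<omega>))"

lemma Jobj_eq_integral_discounted_reward:
  "Jobj M F W mu1 mu2 sig d d a lam Pf \<pi> x p = (\<integral>\<omega>. (\<integral>t. discounted_reward d lam a \<pi> (Pf p)
      (SOME X. surplus_sol M F W mu1 mu2 sig a (Pf p) \<pi> x X) \<omega> t \<partial>lborel) \<partial>M)"
  unfolding Jobj_def Let_def discounted_reward_def set_lebesgue_integral_def
  by (intro Bochner_Integration.integral_cong refl) (auto simp: alive_def disc_same_rate split: split_indicator)

lemma Jobj_le_value_fn:
  "admissible M F W mu1 mu2 sig d1 d2 a lam Pf \<pi> \<Longrightarrow>
    ereal (Jobj M F W mu1 mu2 sig d1 d2 a lam Pf \<pi> x p) \<le> value_fn M F W mu1 mu2 sig d1 d2 a lam Pf x p"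
  unfolding value_fn_def by (intro SUP_upper) simp

lemma borel_measurable_discounted_reward:
  assumes sol: "surplus_sol M F W mu1 mu2 sig a P \<pi> x X" and filt: "is_filtration M F"
    and P_meas: "\<And>s. 0 \<le> s \<Longrightarrow> P s \<in> borel_measurable M"
    and P_cont: "\<And>\<omega>. \<omega> \<in> space M \<Longrightarrow> continuous_on {0..} (\<lambda>s. P s \<omega>)"
    and ctl: "control_ok a \<pi>"
  shows "(\<lambda>z. discounted_reward d lam a \<pi> P X (fst z) (snd z)) \<in> borel_measurable (M \<Otimes>\<^sub>M lborel)"
proof -
  have [measurable]: "ruin_time X \<in> borel_measurable M"
    by (rule borel_measurable_ruin_time_surplus[OF sol filt])
  have [measurable]: "(\<lambda>z. X (max 0 (snd z)) (fst z)) \<in> borel_measurable (M \<Otimes>\<^sub>M lborel)"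
    using surplus_sol_measurable[OF sol filt] surplus_sol_continuous[OF sol]
    by (rule borel_measurable_continuous_paths_nonneg)
  have [measurable]: "(\<lambda>z. P (max 0 (snd z)) (fst z)) \<in> borel_measurable (M \<Otimes>\<^sub>M lborel)"
    using P_meas P_cont by (rule borel_measurable_continuous_paths_nonneg)
  have "(\<lambda>z. (X (max 0 (snd z)) (fst z), P (max 0 (snd z)) (fst z))) \<in> (M \<Otimes>\<^sub>M lborel) \<rightarrow>\<^sub>M (borel \<Otimes>\<^sub>M borel)"
    by measurable
  then have "(\<lambda>z. (X (max 0 (snd z)) (fst z), P (max 0 (snd z)) (fst z)))
      \<in> (M \<Otimes>\<^sub>M lborel) \<rightarrow>\<^sub>M (borel :: (real \<times> real) measure)"
    by (simp add: borel_prod)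
  from measurable_compose[OF this borel_measurable_Hctl[OF ctl]]
  have [measurable]: "(\<lambda>z. Hctl lam a \<pi> (X (max 0 (snd z)) (fst z)) (P (max 0 (snd z)) (fst z)))
      \<in> borel_measurable (M \<Otimes>\<^sub>M lborel)"
    by simp
  have "discounted_reward d lam a \<pi> P X \<omega> t = indicator {t. 0 \<le> t \<and> ereal t < ruin_time X \<omega>} t
      * (exp (- d * t) * Hctl lam a \<pi> (X (max 0 t) \<omega>) (P (max 0 t) \<omega>))" for \<omega> t
    by (simp add: discounted_reward_def alive_def split: split_indicator)
  then show ?thesis
    by (simp only:) measurable
qed

lemma abs_Hctl_le_Habs: "ennreal \<bar>Hctl lam a \<pi> x p\<bar> \<le> Habs lam a \<pi> x p"
  by (simp add: Habs_def)

lemma integrable_discounted_reward: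
  assumes sol: "surplus_sol M F W mu1 mu2 sig a P \<pi> x X" and filt: "is_filtration M F"
    and P_meas: "\<And>s. 0 \<le> s \<Longrightarrow> P s \<in> borel_measurable M"
    and P_cont: "\<And>\<omega>. \<omega> \<in> space M \<Longrightarrow> continuous_on {0..} (\<lambda>s. P s \<omega>)"
    and ctl: "control_ok a \<pi>"
    and finite: "(\<integral>\<^sup>+\<omega>. (\<integral>\<^sup>+t. indicator (alive X \<omega>) t * ennreal (disc d d P t \<omega>)
                   * Habs lam a \<pi> (X t \<omega>) (P t \<omega>) \<partial>lborel) \<partial>M) < \<top>"
  shows "integrable (M \<Otimes>\<^sub>M lborel) (\<lambda>z. discounted_reward d lam a \<pi> P X (fst z) (snd z))"
proof (rule integrableI_bounded)
  let ?R = "\<lambda>z. discounted_reward d lam a \<pi> P X (fst z) (snd z)"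
  show R_meas: "?R \<in> borel_measurable (M \<Otimes>\<^sub>M lborel)"
    by (rule borel_measurable_discounted_reward[OF sol filt P_meas P_cont ctl])
  have "ennreal (norm (discounted_reward d lam a \<pi> P X \<omega> t))
      \<le> indicator (alive X \<omega>) t * ennreal (disc d d P t \<omega>) * Habs lam a \<pi> (X t \<omega>) (P t \<omega>)" for \<omega> t
    using abs_Hctl_le_Habs[of lam a \<pi> "X t \<omega>" "P t \<omega>"]
    by (auto simp: discounted_reward_def alive_def disc_same_rate abs_mult ennreal_mult
        intro: mult_left_mono split: split_indicator)
  then have "(\<integral>\<^sup>+\<omega>. (\<integral>\<^sup>+t. ennreal (norm (?R (\<omega>, t))) \<partial>lborel) \<partial>M)
      \<le> (\<integral>\<^sup>+\<omega>. (\<integral>\<^sup>+t. indicator (alive X \<omega>) t * ennreal (disc d d P t \<omega>)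
                   * Habs lam a \<pi> (X t \<omega>) (P t \<omega>) \<partial>lborel) \<partial>M)"
    by (auto intro!: nn_integral_mono)
  also have "(\<integral>\<^sup>+\<omega>. (\<integral>\<^sup>+t. ennreal (norm (?R (\<omega>, t))) \<partial>lborel) \<partial>M)
      = (\<integral>\<^sup>+z. ennreal (norm (?R z)) \<partial>(M \<Otimes>\<^sub>M lborel))"
  proof (rule lborel.nn_integral_fst)
    have "sets (M \<Otimes>\<^sub>M lborel) = sets (M \<Otimes>\<^sub>M borel)"
      by (rule sets_pair_measure_cong) simp_all
    from R_meas[unfolded measurable_cong_sets[OF this refl]]
    have [measurable]: "?R \<in> borel_measurable (M \<Otimes>\<^sub>M borel)" .
    show "(\<lambda>z. ennreal (norm (?R z))) \<in> borel_measurable (M \<Otimes>\<^sub>M lborel)"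
      by measurable
  qed
  finally show "(\<integral>\<^sup>+z. ennreal (norm (?R z)) \<partial>(M \<Otimes>\<^sub>M lborel)) < \<infinity>"
    using finite by (simp add: order_le_less_trans)
qed

text \<open>Under the myopic control the drift does not depend on the surplus, so the surplus
  equation is solved by integrating the drift.\<close>
lemma surplus_sol_myopic_control:
  fixes P :: "real \<Rightarrow> 'w \<Rightarrow> real" and lam a :: real
  defines "b \<equiv> LINT u:{0..a}|lborel. u * gibbs lam a u 1"
  assumes BM: "std_BM M F W"
    and P_meas: "\<And>s. 0 \<le> s \<Longrightarrow> P s \<in> borel_measurable (F s)"
    and P_cont: "\<And>\<omega>. \<omega> \<in> space M \<Longrightarrow> continuous_on {0..} (\<lambda>s. P s \<omega>)"
  shows "surplus_sol M F W mu1 mu2 sig a P (myopic_control lam a) x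
     (\<lambda>t \<omega>. x + (LINT s:{0..t}|lborel. (mu2 + (mu1 - mu2) * P s \<omega>) - b) + sig * W t \<omega>)"
  unfolding surplus_sol_def
proof (intro conjI allI impI ballI)
  have filt: "is_filtration M F" and W_meas: "\<And>t. 0 \<le> t \<Longrightarrow> W t \<in> borel_measurable (F t)"
    using BM unfolding std_BM_def by auto
  fix t :: real
  assume "0 \<le> t"
  have [measurable]: "W t \<in> borel_measurable (F t)"
    "(\<lambda>\<omega>. LINT s:{0..t}|lborel. (mu2 + (mu1 - mu2) * P s \<omega>) - b) \<in> borel_measurable (F t)"
    using \<open>0 \<le> t\<close> by (auto intro!: W_meas borel_measurable_integral_adapted[OF filt _ _ P_meas P_cont])
  show "(\<lambda>\<omega>. x + (LINT s:{0..t}|lborel. (mu2 + (mu1 - mu2) * P s \<omega>) - b) + sig * W t \<omega>)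
      \<in> borel_measurable (F t)"
    by measurable
next
  fix \<omega>
  assume \<omega>: "\<omega> \<in> space M"
  have "continuous_on {0..} (\<lambda>t. LINT s:{0..t}|lborel. (mu2 + (mu1 - mu2) * P (max 0 s) \<omega>) - b)"
    by (intro continuous_on_integral_Icc continuous_intros continuous_on_compose2[OF P_cont[OF \<omega>]]) auto
  moreover have "(LINT s:{0..t}|lborel. (mu2 + (mu1 - mu2) * P (max 0 s) \<omega>) - b)
      = (LINT s:{0..t}|lborel. (mu2 + (mu1 - mu2) * P s \<omega>) - b)" for t
    by (rule set_lebesgue_integral_cong) auto
  ultimately show "continuous_on {0..}
      (\<lambda>t. x + (LINT s:{0..t}|lborel. (mu2 + (mu1 - mu2) * P s \<omega>) - b) + sig * W t \<omega>)"
    using BM \<omega> unfolding std_BM_def by (auto intro!: continuous_intros)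
next
  show "AE \<omega> in M. \<forall>t\<ge>0. x + (LINT s:{0..t}|lborel. (mu2 + (mu1 - mu2) * P s \<omega>) - b) + sig * W t \<omega> =
      x + (LINT s:{0..t}|lborel. (mu2 + (mu1 - mu2) * P s \<omega>) - bctl a (myopic_control lam a)
        (x + (LINT r:{0..s}|lborel. (mu2 + (mu1 - mu2) * P r \<omega>) - b) + sig * W s \<omega>) (P s \<omega>)) + sig * W t \<omega>"
    by (intro AE_I2) (simp only: b_def bctl_myopic_control simp_thms refl)
qed

lemma nn_integral_discounted_Habs_myopic_control:
  assumes "prob_space M" "lam > 0" "a > 0" "d > 0"
  shows "(\<integral>\<^sup>+\<omega>. (\<integral>\<^sup>+t. indicator (alive X \<omega>) t * ennreal (disc d d P t \<omega>)
      * Habs lam a (myopic_control lam a) (X t \<omega>) (P t \<omega>) \<partial>lborel) \<partial>M) < \<top>"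
proof -
  interpret prob_space M by fact
  let ?c = "\<bar>f_lam lam a 0\<bar>"
  have "(\<integral>\<^sup>+t. indicator (alive X \<omega>) t * ennreal (disc d d P t \<omega>)
      * Habs lam a (myopic_control lam a) (X t \<omega>) (P t \<omega>) \<partial>lborel)
      \<le> (\<integral>\<^sup>+t. ennreal (?c * (indicator {0..} t *\<^sub>R exp (- d * t))) \<partial>lborel)" for \<omega>
    by (intro nn_integral_mono)
      (auto simp: alive_def disc_same_rate Habs_myopic_control[OF assms(2,3)]
        ennreal_mult'[symmetric] mult.commute split: split_indicator)
  also have "\<dots> = ennreal (\<integral>t. ?c * (indicator {0..} t *\<^sub>R exp (- d * t)) \<partial>lborel)"
    using set_integrable_exp_neg[OF \<open>d > 0\<close>] unfolding set_integrable_def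
    by (intro nn_integral_eq_integral) auto
  also have "\<dots> = ennreal (?c / d)"
    using integral_exp_neg[OF \<open>d > 0\<close>] by (simp add: set_lebesgue_integral_def)
  finally have "(\<integral>\<^sup>+\<omega>. (\<integral>\<^sup>+t. indicator (alive X \<omega>) t * ennreal (disc d d P t \<omega>)
      * Habs lam a (myopic_control lam a) (X t \<omega>) (P t \<omega>) \<partial>lborel) \<partial>M) \<le> (\<integral>\<^sup>+\<omega>. ennreal (?c / d) \<partial>M)"
    by (intro nn_integral_mono)
  also have "\<dots> < \<top>"
    by (simp add: emeasure_space_1)
  finally show ?thesis .
qed

lemma admissible_myopic_control:
  assumes BM: "std_BM M F W"
    and belief: "\<forall>p0\<in>{0<..<1}. belief_process M F W mu1 mu2 sig q12 q21 p0 (Pf p0)"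
    and "lam > 0" "a > 0" "d > 0"
  shows "admissible M F W mu1 mu2 sig d d a lam Pf (myopic_control lam a)"
  unfolding admissible_def Let_def
proof (intro conjI allI impI ballI)
  show "control_ok a (myopic_control lam a)"
    by (rule control_ok_myopic_control[OF \<open>lam > 0\<close> \<open>a > 0\<close>])
  fix x p :: real
  assume "p \<in> {0<..<1}"
  then show "\<exists>X. surplus_sol M F W mu1 mu2 sig a (Pf p) (myopic_control lam a) x X"
    using belief surplus_sol_myopic_control[OF BM] unfolding belief_process_def by blast
  fix X Y
  assume "surplus_sol M F W mu1 mu2 sig a (Pf p) (myopic_control lam a) x X"
    and "surplus_sol M F W mu1 mu2 sig a (Pf p) (myopic_control lam a) x Y"
  then have "AE \<omega> in M. \<forall>t\<ge>0. X t \<omega> = x + (LINT s:{0..t}|lborel. (mu2 + (mu1 - mu2) * Pf p s \<omega>)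
      - (LINT u:{0..a}|lborel. u * gibbs lam a u 1)) + sig * W t \<omega>"
    and "AE \<omega> in M. \<forall>t\<ge>0. Y t \<omega> = x + (LINT s:{0..t}|lborel. (mu2 + (mu1 - mu2) * Pf p s \<omega>)
      - (LINT u:{0..a}|lborel. u * gibbs lam a u 1)) + sig * W t \<omega>"
    unfolding surplus_sol_def by (simp_all only: bctl_myopic_control)
  then show "AE \<omega> in M. \<forall>t\<ge>0. X t \<omega> = Y t \<omega>"
    by eventually_elim auto
next
  fix x p :: real
  show "(\<integral>\<^sup>+\<omega>. (\<integral>\<^sup>+t. indicator (alive X \<omega>) t * ennreal (disc d d (Pf p) t \<omega>)
      * Habs lam a (myopic_control lam a) (X t \<omega>) (Pf p t \<omega>) \<partial>lborel) \<partial>M) < \<top>" for X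
    using BM assms(3-5) unfolding std_BM_def by (intro nn_integral_discounted_Habs_myopic_control) auto
qed

lemma discounted_reward_myopic_control:
  assumes "lam > 0" "a > 0"
  shows "discounted_reward d lam a (myopic_control lam a) P X \<omega> t
    = f_lam lam a 0 * (indicator (alive X \<omega>) t * exp (- d * t))"
  by (simp add: discounted_reward_def Hctl_myopic_control[OF assms])

lemma Jobj_myopic_control:
  assumes "lam > 0" "a > 0"
  shows "Jobj M F W mu1 mu2 sig d d a lam Pf (myopic_control lam a) x p
    = f_lam lam a 0 * (\<integral>\<omega>. discounted_lifetime d
        (ruin_time (SOME X. surplus_sol M F W mu1 mu2 sig a (Pf p) (myopic_control lam a) x X) \<omega>) \<partial>M)"
  by (simp add: Jobj_eq_integral_discounted_reward discounted_reward_myopic_control[OF assms]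
      discounted_lifetime_ruin_time)

lemma discounted_reward_le_of_gibbs:
  assumes "lam > 0" "a > 0" "0 \<le> t \<Longrightarrow> P t \<omega> \<in> {0<..<1}"
    and gibbs_form: "\<And>y q u. 0 \<le> y \<Longrightarrow> q \<in> {0<..<1} \<Longrightarrow> u \<in> {0..a} \<Longrightarrow> \<pi> u y q = gibbs lam a u (S y q)"
  shows "discounted_reward d lam a \<pi> P X \<omega> t \<le> f_lam lam a 0 * (indicator (alive X \<omega>) t * exp (- d * t))"
proof (cases "t \<in> alive X \<omega>")
  case True
  then have "Hctl lam a \<pi> (X t \<omega>) (P t \<omega>) \<le> f_lam lam a 0"
    using pos_of_alive[OF True] assms(3) gibbs_form by (intro Hctl_le_of_gibbs[OF assms(1,2)]) (auto simp: alive_def)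
  then show ?thesis
    using True by (simp add: discounted_reward_def mult.commute)
qed (simp add: discounted_reward_def)

lemma Jobj_le_of_gibbs_form:
  assumes BM: "std_BM M F W" and belief: "belief_process M F W mu1 mu2 sig q12 q21 p (Pf p)"
    and p: "p \<in> {0<..<1}" and adm: "admissible M F W mu1 mu2 sig d d a lam Pf \<pi>" and "0 \<le> x"
    and gibbs_form: "\<And>y q u. 0 \<le> y \<Longrightarrow> q \<in> {0<..<1} \<Longrightarrow> u \<in> {0..a} \<Longrightarrow> \<pi> u y q = gibbs lam a u (S y q)"
    and "lam > 0" "a > 0" "d > 0"
  shows "Jobj M F W mu1 mu2 sig d d a lam Pf \<pi> x p \<le> f_lam lam a 0 * (\<integral>\<omega>. discounted_lifetime d
      (ruin_time (SOME X. surplus_sol M F W mu1 mu2 sig a (Pf p) \<pi> x X) \<omega>) \<partial>M)"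
proof -
  define X where "X = (SOME X. surplus_sol M F W mu1 mu2 sig a (Pf p) \<pi> x X)"
  have "prob_space M" and filt: "is_filtration M F"
    using BM unfolding std_BM_def by auto
  have ctl: "control_ok a \<pi>"
    using adm unfolding admissible_def by blast
  have sol: "surplus_sol M F W mu1 mu2 sig a (Pf p) \<pi> x X"
    unfolding X_def by (rule surplus_sol_admissible[OF adm p \<open>0 \<le> x\<close>])
  have "(\<integral>\<^sup>+\<omega>. (\<integral>\<^sup>+t. indicator (alive X \<omega>) t * ennreal (disc d d (Pf p) t \<omega>)
      * Habs lam a \<pi> (X t \<omega>) (Pf p t \<omega>) \<partial>lborel) \<partial>M) < \<top>"
    using adm p \<open>0 \<le> x\<close> unfolding admissible_def Let_def X_def by blast
  with sol filt ctl belief_process_continuous[OF belief]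
    measurable_from_filtration[OF filt belief_process_adapted[OF belief]]
  have "integrable (M \<Otimes>\<^sub>M lborel) (\<lambda>z. discounted_reward d lam a \<pi> (Pf p) X (fst z) (snd z))"
    by (intro integrable_discounted_reward) auto
  moreover have "integrable lborel (\<lambda>t. f_lam lam a 0 * (indicator (alive X \<omega>) t * exp (- d * t)))" for \<omega>
    using set_integrable_subset[OF set_integrable_exp_neg[OF \<open>d > 0\<close>], of "alive X \<omega>"]
    by (auto simp: alive_def set_integrable_def)
  moreover have "integrable M (\<lambda>\<omega>. \<integral>t. f_lam lam a 0 * (indicator (alive X \<omega>) t * exp (- d * t)) \<partial>lborel)"
    using integrable_discounted_lifetime[OF \<open>prob_space M\<close> borel_measurable_ruin_time_surplus[OF sol filt] \<open>d > 0\<close>]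
    by (simp add: discounted_lifetime_ruin_time)
  ultimately have "(\<integral>\<omega>. (\<integral>t. discounted_reward d lam a \<pi> (Pf p) X \<omega> t \<partial>lborel) \<partial>M)
      \<le> (\<integral>\<omega>. (\<integral>t. f_lam lam a 0 * (indicator (alive X \<omega>) t * exp (- d * t)) \<partial>lborel) \<partial>M)"
    using belief_process_range[OF belief] gibbs_form \<open>prob_space M\<close>
    by (intro iterated_integral_mono discounted_reward_le_of_gibbs[OF \<open>lam > 0\<close> \<open>a > 0\<close>])
      (auto simp: prob_space_imp_sigma_finite)
  then show ?thesis
    by (simp add: Jobj_eq_integral_discounted_reward discounted_lifetime_ruin_time X_def)
qed
theorem proposition4p3:
  fixes M :: "'w measure" and F :: "real \<Rightarrow> 'w measure" and W :: "real \<Rightarrow> 'w \<Rightarrow> real"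
    and Pf :: "real \<Rightarrow> real \<Rightarrow> 'w \<Rightarrow> real"
    and mu1 mu2 sig q12 q21 d1 d2 delta a lam :: real
    and \<pi>s :: "real \<Rightarrow> real \<Rightarrow> real \<Rightarrow> real" and Vx :: "real \<Rightarrow> real \<Rightarrow> real"
  assumes "mu1 > 0" "mu2 > 0" "mu1 \<noteq> mu2" "sig > 0" "q12 > 0" "q21 > 0"
    and "delta > 0" "d1 = delta" "d2 = delta" "a > 0" "lam > 0"
    and "std_BM M F W"
    and "\<forall>p0\<in>{0<..<1}. belief_process M F W mu1 mu2 sig q12 q21 p0 (Pf p0)"
    and "admissible M F W mu1 mu2 sig d1 d2 a lam Pf \<pi>s"
    and "\<forall>x\<ge>0. \<forall>p\<in>{0<..<1}.
           value_fn M F W mu1 mu2 sig d1 d2 a lam Pf x p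
             = ereal (Jobj M F W mu1 mu2 sig d1 d2 a lam Pf \<pi>s x p)"
    and "\<forall>p\<in>{0<..<1}. \<forall>x\<ge>0.
           ((\<lambda>y. real_of_ereal (value_fn M F W mu1 mu2 sig d1 d2 a lam Pf y p))
              has_real_derivative Vx x p) (at x within {0..})"
    and "\<forall>x\<ge>0. \<forall>p\<in>{0<..<1}. \<forall>u\<in>{0..a}. \<pi>s u x p = gibbs lam a u (1 - Vx x p)"
  shows "\<forall>p\<in>{0<..<1}.
           ((\<lambda>x. real_of_ereal (value_fn M F W mu1 mu2 sig d1 d2 a lam Pf x p))
              \<longlongrightarrow> f_lam lam a 0 / delta) at_top
           \<and> f_lam lam a 0 / delta = lam * ln (lam * (exp (a / lam) - 1)) / delta"
proof (intro ballI conjI)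
  fix p :: real
  assume p: "p \<in> {0<..<1}"
  note BM = \<open>std_BM M F W\<close> and belief = assms(13)[rule_format, OF p]
  note pos = \<open>lam > 0\<close> \<open>a > 0\<close> \<open>delta > 0\<close>
  have opt: "admissible M F W mu1 mu2 sig delta delta a lam Pf \<pi>s"
    and V_eq: "\<And>x. 0 \<le> x \<Longrightarrow> real_of_ereal (value_fn M F W mu1 mu2 sig d1 d2 a lam Pf x p)
      = Jobj M F W mu1 mu2 sig delta delta a lam Pf \<pi>s x p"
    using assms(8,9,14,15) p by auto
  have myopic: "admissible M F W mu1 mu2 sig delta delta a lam Pf (myopic_control lam a)"
    by (rule admissible_myopic_control[OF BM assms(13) pos])
  define L where "L \<pi> x = f_lam lam a 0 * (\<integral>\<omega>. discounted_lifetime delta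
    (ruin_time (SOME X. surplus_sol M F W mu1 mu2 sig a (Pf p) \<pi> x X) \<omega>) \<partial>M)" for \<pi> x
  have lower: "L (myopic_control lam a) x \<le> Jobj M F W mu1 mu2 sig delta delta a lam Pf \<pi>s x p" if "0 \<le> x" for x
    using Jobj_le_value_fn[OF myopic, of x p] assms(15)[rule_format, OF that p] assms(8,9)
    by (simp add: L_def Jobj_myopic_control[OF pos(1,2)])
  \<comment> \<open>Only the Gibbs form of \<open>\<pi>s\<close> matters here, not its parameter \<open>1 - Vx\<close>.\<close>
  have upper: "Jobj M F W mu1 mu2 sig delta delta a lam Pf \<pi>s x p \<le> L \<pi>s x" if "0 \<le> x" for x
    using Jobj_le_of_gibbs_form[OF BM belief p opt that _ pos, of "\<lambda>y q. 1 - Vx y q"] assms(17) p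
    by (simp add: L_def)
  have "(L \<pi> \<longlongrightarrow> f_lam lam a 0 * (1 / delta)) at_top" if "admissible M F W mu1 mu2 sig delta delta a lam Pf \<pi>" for \<pi>
    unfolding L_def
    by (intro tendsto_mult_left expected_discounted_lifetime_tendsto_admissible[OF BM belief p that pos(2,3)])
  from tendsto_sandwich[OF eventually_mono[OF eventually_ge_at_top lower]
      eventually_mono[OF eventually_ge_at_top upper] this[OF myopic] this[OF opt]]
  have "((\<lambda>x. Jobj M F W mu1 mu2 sig delta delta a lam Pf \<pi>s x p) \<longlongrightarrow> f_lam lam a 0 / delta) at_top"
    by simp
  moreover have "eventually (\<lambda>x. Jobj M F W mu1 mu2 sig delta delta a lam Pf \<pi>s x p
      = real_of_ereal (value_fn M F W mu1 mu2 sig d1 d2 a lam Pf x p)) at_top"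
    using eventually_ge_at_top[of 0] by eventually_elim (simp add: V_eq)
  ultimately show "((\<lambda>x. real_of_ereal (value_fn M F W mu1 mu2 sig d1 d2 a lam Pf x p))
      \<longlongrightarrow> f_lam lam a 0 / delta) at_top"
    by (rule Lim_transform_eventually)
  show "f_lam lam a 0 / delta = lam * ln (lam * (exp (a / lam) - 1)) / delta"
    by (simp add: f_lam_zero)
qed

end
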